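(* Let $Q=(G\leftleftarrows A)$ be a group-like graph. Then the bialgebra $(\mathbf k[A]\xrightarrow{\phi}\mathbf k[G])$ in $\mathcal{LM}$ (with $\phi(a)=t(a)-s(a)$, bimodule structure from the two-sided $G$-action on $A$, $\Delta_0(g)=g\otimes g$, $\Delta_1(a)=a\otimes t(a)+s(a)\otimes a$) is a Hopf algebra in $\mathcal{LM}$, with antipode given by $S_0(g)=g^{-1}$ on $\mathbf k[G]$ and $S_1(a)=-s(a)^{-1}\cdot a\cdot t(a)^{-1}$ on $\mathbf k[A]$.
   Context: A group-like graph is a directed graph $(G\overset{s}{\underset{t}{\leftleftarrows}}A)$ with an associative morphism $\mu$ from its Cartesian square (vertices $G\times G$, arrows $A\times G\sqcup G\times A$) to itself, such that the induced semigroup structure on $G$ is a group; $\mu$ gives left and right actions of $G$ on $A$ compatible with $s,t$ (e.g. $s(g\cdot a)=gs(a)$, $t(a\cdot g)=t(a)g$). Over a field $\mathbf k$ of characteristic $0$, the category $\mathcal{LM}$ has objects linear maps $U\to V$ and tensor product $(U\xrightarrow{f}V)\otimes(U'\xrightarrow{f'}V')=(U\otimes V'+V\otimes U'\to V\otimes V')$. A bialgebra in $\mathcal{LM}$ is $(\mathcal A\xrightarrow{f}\mathcal H)$ with $\mathcal H$ a bialgebra (coproduct $\Delta_0$), $\mathcal A$ an $\mathcal H$-bimodule, $f$ a bimodule map, and a bimodule map $\Delta_1:\mathcal A\to\mathcal A\otimes\mathcal H+\mathcal H\otimes\mathcal A$ with $\Delta_0 f=(f\otimes\mathrm{Id}+\mathrm{Id}\otimes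 f)\Delta_1$. It is a Hopf algebra if there are an antipode $S_0$ of $\mathcal H$ and a linear map $S_1:\mathcal A\to\mathcal A$ with $f S_1=S_0 f$ such that $\mu\circ(S_1\otimes\mathrm{Id}_{\mathcal H}+S_0\otimes\mathrm{Id}_{\mathcal A})\circ\Delta_1=\mu\circ(\mathrm{Id}_{\mathcal A}\otimes S_0+\mathrm{Id}_{\mathcal H}\otimes S_1)\circ\Delta_1=0$, where $\mu$ denotes the bimodule actions $\mathcal A\otimes\mathcal H+\mathcal H\otimes\mathcal A\to\mathcal A$. *)

theory Defs
  imports Main "HOL-Library.Poly_Mapping"
begin

text \<open>The free vector space k[X] is modelled as the type of finitely supported
functions X =>0 k, the tensor product k[X] \<otimes> k[Y] as k[X \<times> Y], and the
direct sum V \<oplus> W as the product type V \<times> W.\<close>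

definition bvec :: "'x \<Rightarrow> ('x \<Rightarrow>\<^sub>0 'k::field)" where
  "bvec x = Poly_Mapping.single x 1"

definition smul :: "'k::field \<Rightarrow> ('x \<Rightarrow>\<^sub>0 'k) \<Rightarrow> ('x \<Rightarrow>\<^sub>0 'k)" where
  "smul c u = Poly_Mapping.map ((*) c) u"

definition lin_ext :: "('x \<Rightarrow> ('y \<Rightarrow>\<^sub>0 'k::field)) \<Rightarrow> ('x \<Rightarrow>\<^sub>0 'k) \<Rightarrow> ('y \<Rightarrow>\<^sub>0 'k)" where
  "lin_ext b v = (\<Sum>x\<in>Poly_Mapping.keys v. smul (Poly_Mapping.lookup v x) (b x))"

definition lin_ext_scalar :: "('x \<Rightarrow> 'k::field) \<Rightarrow> ('x \<Rightarrow>\<^sub>0 'k) \<Rightarrow> 'k" where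
  "lin_ext_scalar b v = (\<Sum>x\<in>Poly_Mapping.keys v. Poly_Mapping.lookup v x * b x)"

definition lin_map :: "(('x \<Rightarrow>\<^sub>0 'k::field) \<Rightarrow> ('y \<Rightarrow>\<^sub>0 'k)) \<Rightarrow> bool" where
  "lin_map F \<longleftrightarrow> (\<forall>u v. F (u + v) = F u + F v) \<and> (\<forall>c u. F (smul c u) = smul c (F u))"

definition tens :: "('x \<Rightarrow>\<^sub>0 'k::field) \<Rightarrow> ('y \<Rightarrow>\<^sub>0 'k) \<Rightarrow> ('x \<times> 'y \<Rightarrow>\<^sub>0 'k)" where
  "tens u v = (\<Sum>x\<in>Poly_Mapping.keys u. \<Sum>y\<in>Poly_Mapping.keys v. Poly_Mapping.single (x, y) (Poly_Mapping.lookup u x * Poly_Mapping.lookup v y))"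

definition tmap :: "(('x \<Rightarrow>\<^sub>0 'k::field) \<Rightarrow> ('u \<Rightarrow>\<^sub>0 'k)) \<Rightarrow> (('y \<Rightarrow>\<^sub>0 'k) \<Rightarrow> ('v \<Rightarrow>\<^sub>0 'k))
    \<Rightarrow> ('x \<times> 'y \<Rightarrow>\<^sub>0 'k) \<Rightarrow> ('u \<times> 'v \<Rightarrow>\<^sub>0 'k)" where
  "tmap F F' = lin_ext (\<lambda>(x, y). tens (F (bvec x)) (F' (bvec y)))"

definition reassoc :: "(('x \<times> 'y) \<times> 'z \<Rightarrow>\<^sub>0 'k::field) \<Rightarrow> ('x \<times> ('y \<times> 'z) \<Rightarrow>\<^sub>0 'k)" where
  "reassoc = lin_ext (\<lambda>((x, y), z). bvec (x, (y, z)))"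

definition is_algebra ::
  "(('x \<times> 'x \<Rightarrow>\<^sub>0 'k::field) \<Rightarrow> ('x \<Rightarrow>\<^sub>0 'k)) \<Rightarrow> ('x \<Rightarrow>\<^sub>0 'k) \<Rightarrow> bool" where
  "is_algebra m eta \<longleftrightarrow> lin_map m
     \<and> (\<forall>u v w. m (tens (m (tens u v)) w) = m (tens u (m (tens v w))))
     \<and> (\<forall>u. m (tens eta u) = u \<and> m (tens u eta) = u)"

definition is_coalgebra ::
  "(('x \<Rightarrow>\<^sub>0 'k::field) \<Rightarrow> ('x \<times> 'x \<Rightarrow>\<^sub>0 'k)) \<Rightarrow> (('x \<Rightarrow>\<^sub>0 'k) \<Rightarrow> 'k) \<Rightarrow> bool" where
  "is_coalgebra D eps \<longleftrightarrow> lin_map D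
     \<and> (\<forall>u v. eps (u + v) = eps u + eps v) \<and> (\<forall>c u. eps (smul c u) = c * eps u)
     \<and> (\<forall>u. reassoc (tmap D id (D u)) = tmap id D (D u))
     \<and> (\<forall>u. lin_ext (\<lambda>(x, y). smul (eps (bvec x)) (bvec y)) (D u) = u)
     \<and> (\<forall>u. lin_ext (\<lambda>(x, y). smul (eps (bvec y)) (bvec x)) (D u) = u)"

definition mult_tensor ::
  "(('x \<times> 'x \<Rightarrow>\<^sub>0 'k::field) \<Rightarrow> ('x \<Rightarrow>\<^sub>0 'k)) \<Rightarrow> (('x \<times> 'x) \<times> ('x \<times> 'x) \<Rightarrow>\<^sub>0 'k) \<Rightarrow> ('x \<times> 'x \<Rightarrow>\<^sub>0 'k)" where
  "mult_tensor m = lin_ext (\<lambda>((x1, x2), (y1, y2)).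
      tens (m (tens (bvec x1) (bvec y1))) (m (tens (bvec x2) (bvec y2))))"

definition is_bialgebra ::
  "(('x \<times> 'x \<Rightarrow>\<^sub>0 'k::field) \<Rightarrow> ('x \<Rightarrow>\<^sub>0 'k)) \<Rightarrow> ('x \<Rightarrow>\<^sub>0 'k)
   \<Rightarrow> (('x \<Rightarrow>\<^sub>0 'k) \<Rightarrow> ('x \<times> 'x \<Rightarrow>\<^sub>0 'k)) \<Rightarrow> (('x \<Rightarrow>\<^sub>0 'k) \<Rightarrow> 'k) \<Rightarrow> bool" where
  "is_bialgebra m eta D eps \<longleftrightarrow> is_algebra m eta \<and> is_coalgebra D eps
     \<and> (\<forall>u v. D (m (tens u v)) = mult_tensor m (tens (D u) (D v)))
     \<and> D eta = tens eta eta
     \<and> (\<forall>u v. eps (m (tens u v)) = eps u * eps v)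
     \<and> eps eta = 1"

definition is_antipode ::
  "(('x \<times> 'x \<Rightarrow>\<^sub>0 'k::field) \<Rightarrow> ('x \<Rightarrow>\<^sub>0 'k)) \<Rightarrow> ('x \<Rightarrow>\<^sub>0 'k)
   \<Rightarrow> (('x \<Rightarrow>\<^sub>0 'k) \<Rightarrow> ('x \<times> 'x \<Rightarrow>\<^sub>0 'k)) \<Rightarrow> (('x \<Rightarrow>\<^sub>0 'k) \<Rightarrow> 'k)
   \<Rightarrow> (('x \<Rightarrow>\<^sub>0 'k) \<Rightarrow> ('x \<Rightarrow>\<^sub>0 'k)) \<Rightarrow> bool" where
  "is_antipode m eta D eps S \<longleftrightarrow> lin_map S
     \<and> (\<forall>u. m (tmap S id (D u)) = smul (eps u) eta)
     \<and> (\<forall>u. m (tmap id S (D u)) = smul (eps u) eta)"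

definition is_bimodule ::
  "(('x \<times> 'x \<Rightarrow>\<^sub>0 'k::field) \<Rightarrow> ('x \<Rightarrow>\<^sub>0 'k)) \<Rightarrow> ('x \<Rightarrow>\<^sub>0 'k)
   \<Rightarrow> (('x \<times> 'y \<Rightarrow>\<^sub>0 'k) \<Rightarrow> ('y \<Rightarrow>\<^sub>0 'k)) \<Rightarrow> (('y \<times> 'x \<Rightarrow>\<^sub>0 'k) \<Rightarrow> ('y \<Rightarrow>\<^sub>0 'k)) \<Rightarrow> bool" where
  "is_bimodule m eta la ra \<longleftrightarrow> lin_map la \<and> lin_map ra
     \<and> (\<forall>h h' a. la (tens h (la (tens h' a))) = la (tens (m (tens h h')) a))
     \<and> (\<forall>a. la (tens eta a) = a)
     \<and> (\<forall>h h' a. ra (tens (ra (tens a h)) h') = ra (tens a (m (tens h h'))))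
     \<and> (\<forall>a. ra (tens a eta) = a)
     \<and> (\<forall>h h' a. ra (tens (la (tens h a)) h') = la (tens h (ra (tens a h'))))"

text \<open>The induced H-bimodule structures (via the coproduct) on A \<otimes> H and H \<otimes> A.\<close>
definition left_AH where
  "left_AH m D la h p = lin_ext (\<lambda>(x1, x2). lin_ext (\<lambda>(y, x).
      tens (la (tens (bvec x1) (bvec y))) (m (tens (bvec x2) (bvec x)))) p) (D h)"

definition left_HA where
  "left_HA m D la h q = lin_ext (\<lambda>(x1, x2). lin_ext (\<lambda>(x, y).
      tens (m (tens (bvec x1) (bvec x))) (la (tens (bvec x2) (bvec y)))) q) (D h)"

definition right_AH where
  "right_AH m D ra p h = lin_ext (\<lambda>(x1, x2). lin_ext (\<lambda>(y, x).
      tens (ra (tens (bvec y) (bvec x1))) (m (tens (bvec x) (bvec x2)))) p) (D h)"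

definition right_HA where
  "right_HA m D ra q h = lin_ext (\<lambda>(x1, x2). lin_ext (\<lambda>(x, y).
      tens (m (tens (bvec x) (bvec x1))) (ra (tens (bvec y) (bvec x2)))) q) (D h)"

text \<open>Bialgebra in LM: (A --f--> H), with \<Delta>_1 : A \<rightarrow> A \<otimes> H \<oplus> H \<otimes> A.\<close>
definition is_bialgebra_LM ::
  "(('x \<times> 'x \<Rightarrow>\<^sub>0 'k::field) \<Rightarrow> ('x \<Rightarrow>\<^sub>0 'k)) \<Rightarrow> ('x \<Rightarrow>\<^sub>0 'k)
   \<Rightarrow> (('x \<Rightarrow>\<^sub>0 'k) \<Rightarrow> ('x \<times> 'x \<Rightarrow>\<^sub>0 'k)) \<Rightarrow> (('x \<Rightarrow>\<^sub>0 'k) \<Rightarrow> 'k)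
   \<Rightarrow> (('x \<times> 'y \<Rightarrow>\<^sub>0 'k) \<Rightarrow> ('y \<Rightarrow>\<^sub>0 'k)) \<Rightarrow> (('y \<times> 'x \<Rightarrow>\<^sub>0 'k) \<Rightarrow> ('y \<Rightarrow>\<^sub>0 'k))
   \<Rightarrow> (('y \<Rightarrow>\<^sub>0 'k) \<Rightarrow> ('x \<Rightarrow>\<^sub>0 'k))
   \<Rightarrow> (('y \<Rightarrow>\<^sub>0 'k) \<Rightarrow> ('y \<times> 'x \<Rightarrow>\<^sub>0 'k) \<times> ('x \<times> 'y \<Rightarrow>\<^sub>0 'k)) \<Rightarrow> bool" where
  "is_bialgebra_LM m eta D0 eps la ra f D1 \<longleftrightarrow>
     is_bialgebra m eta D0 eps \<and> is_bimodule m eta la ra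
     \<and> lin_map f
     \<and> (\<forall>h a. f (la (tens h a)) = m (tens h (f a)))
     \<and> (\<forall>h a. f (ra (tens a h)) = m (tens (f a) h))
     \<and> lin_map (\<lambda>a. fst (D1 a)) \<and> lin_map (\<lambda>a. snd (D1 a))
     \<and> (\<forall>h a. D1 (la (tens h a)) = (left_AH m D0 la h (fst (D1 a)), left_HA m D0 la h (snd (D1 a))))
     \<and> (\<forall>h a. D1 (ra (tens a h)) = (right_AH m D0 ra (fst (D1 a)) h, right_HA m D0 ra (snd (D1 a)) h))
     \<and> (\<forall>a. D0 (f a) = tmap f id (fst (D1 a)) + tmap id f (snd (D1 a)))"

definition is_hopf_LM where
  "is_hopf_LM m eta D0 eps la ra f D1 S0 S1 \<longleftrightarrow>
     is_bialgebra_LM m eta D0 eps la ra f D1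
     \<and> is_antipode m eta D0 eps S0
     \<and> lin_map S1
     \<and> (\<forall>a. f (S1 a) = S0 (f a))
     \<and> (\<forall>a. ra (tmap S1 id (fst (D1 a))) + la (tmap S0 id (snd (D1 a))) = 0)
     \<and> (\<forall>a. ra (tmap id S0 (fst (D1 a))) + la (tmap id S1 (snd (D1 a))) = 0)"

text \<open>Vertices: type 'g; arrows: type 'a; source s, target t; the morphism
\<mu> is given on vertices by mult and on arrows by the left action lact
(G \<times> A \<rightarrow> A) and the right action ract (A \<times> G \<rightarrow> A).\<close>
definition group_like_graph ::
  "('g \<Rightarrow> 'g \<Rightarrow> 'g) \<Rightarrow> 'g \<Rightarrow> ('g \<Rightarrow> 'g) \<Rightarrow> ('a \<Rightarrow> 'g) \<Rightarrow> ('a \<Rightarrow> 'g)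
   \<Rightarrow> ('g \<Rightarrow> 'a \<Rightarrow> 'a) \<Rightarrow> ('a \<Rightarrow> 'g \<Rightarrow> 'a) \<Rightarrow> bool" where
  "group_like_graph mult e ginv s t lact ract \<longleftrightarrow>
     group mult e ginv
     \<comment> \<open>\<mu> is a graph morphism\<close>
     \<and> (\<forall>g a. s (lact g a) = mult g (s a) \<and> t (lact g a) = mult g (t a))
     \<and> (\<forall>a g. s (ract a g) = mult (s a) g \<and> t (ract a g) = mult (t a) g)
     \<comment> \<open>\<mu> is associative\<close>
     \<and> (\<forall>a g h. ract (ract a g) h = ract a (mult g h))
     \<and> (\<forall>g a h. ract (lact g a) h = lact g (ract a h))
     \<and> (\<forall>g h a. lact (mult g h) a = lact g (lact h a))
     \<comment> \<open>unitality of the actions\<close>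
     \<and> (\<forall>a. lact e a = a \<and> ract a e = a)"

definition kG_mult :: "('g \<Rightarrow> 'g \<Rightarrow> 'g) \<Rightarrow> ('g \<times> 'g \<Rightarrow>\<^sub>0 'k::field) \<Rightarrow> ('g \<Rightarrow>\<^sub>0 'k)" where
  "kG_mult mult = lin_ext (\<lambda>(g, h). bvec (mult g h))"

definition kG_unit :: "'g \<Rightarrow> ('g \<Rightarrow>\<^sub>0 'k::field)" where
  "kG_unit e = bvec e"

definition kG_Delta0 :: "('g \<Rightarrow>\<^sub>0 'k::field) \<Rightarrow> ('g \<times> 'g \<Rightarrow>\<^sub>0 'k)" where
  "kG_Delta0 = lin_ext (\<lambda>g. bvec (g, g))"

definition kG_counit :: "('g \<Rightarrow>\<^sub>0 'k::field) \<Rightarrow> 'k" where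
  "kG_counit = lin_ext_scalar (\<lambda>g. 1)"

definition kA_lact :: "('g \<Rightarrow> 'a \<Rightarrow> 'a) \<Rightarrow> ('g \<times> 'a \<Rightarrow>\<^sub>0 'k::field) \<Rightarrow> ('a \<Rightarrow>\<^sub>0 'k)" where
  "kA_lact lact = lin_ext (\<lambda>(g, a). bvec (lact g a))"

definition kA_ract :: "('a \<Rightarrow> 'g \<Rightarrow> 'a) \<Rightarrow> ('a \<times> 'g \<Rightarrow>\<^sub>0 'k::field) \<Rightarrow> ('a \<Rightarrow>\<^sub>0 'k)" where
  "kA_ract ract = lin_ext (\<lambda>(a, g). bvec (ract a g))"

definition kA_phi :: "('a \<Rightarrow> 'g) \<Rightarrow> ('a \<Rightarrow> 'g) \<Rightarrow> ('a \<Rightarrow>\<^sub>0 'k::field) \<Rightarrow> ('g \<Rightarrow>\<^sub>0 'k)" where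
  "kA_phi s t = lin_ext (\<lambda>a. bvec (t a) - bvec (s a))"

definition kA_Delta1 :: "('a \<Rightarrow> 'g) \<Rightarrow> ('a \<Rightarrow> 'g) \<Rightarrow> ('a \<Rightarrow>\<^sub>0 'k::field)
    \<Rightarrow> ('a \<times> 'g \<Rightarrow>\<^sub>0 'k) \<times> ('g \<times> 'a \<Rightarrow>\<^sub>0 'k)" where
  "kA_Delta1 s t v = (lin_ext (\<lambda>a. bvec (a, t a)) v, lin_ext (\<lambda>a. bvec (s a, a)) v)"

definition kG_S0 :: "('g \<Rightarrow> 'g) \<Rightarrow> ('g \<Rightarrow>\<^sub>0 'k::field) \<Rightarrow> ('g \<Rightarrow>\<^sub>0 'k)" where
  "kG_S0 ginv = lin_ext (\<lambda>g. bvec (ginv g))"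

definition kA_S1 :: "('g \<Rightarrow> 'g) \<Rightarrow> ('a \<Rightarrow> 'g) \<Rightarrow> ('a \<Rightarrow> 'g) \<Rightarrow> ('g \<Rightarrow> 'a \<Rightarrow> 'a) \<Rightarrow> ('a \<Rightarrow> 'g \<Rightarrow> 'a)
    \<Rightarrow> ('a \<Rightarrow>\<^sub>0 'k::field) \<Rightarrow> ('a \<Rightarrow>\<^sub>0 'k)" where
  "kA_S1 ginv s t lact ract = lin_ext (\<lambda>a. - bvec (ract (lact (ginv (s a)) a) (ginv (t a))))"

end

theory Submission
  imports Defs
begin

text \<open>Every structure map is the linear extension of a map on basis vectors, and every axiom of
a Hopf algebra in LM is an identity between maps that are linear in each argument. Such an
identity holds once it holds on basis vectors, where it becomes a law of the group-like graph.
The only non-formal case is the antipode axiom: since \<open>\<Delta>\<^sub>1(a) = a \<otimes> t(a) + s(a) \<otimes> a\<close>,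
it reads \<open>S\<^sub>1(a) t(a) + s(a)\<^sup>-\<^sup>1 a = -s(a)\<^sup>-\<^sup>1 a t(a)\<^sup>-\<^sup>1 t(a) + s(a)\<^sup>-\<^sup>1 a = 0\<close>, and
symmetrically \<open>a t(a)\<^sup>-\<^sup>1 + s(a) S\<^sub>1(a) = 0\<close>.\<close>

lemma lookup_smul [simp]: "Poly_Mapping.lookup (smul c u) x = c * Poly_Mapping.lookup u x"
  by (simp add: smul_def Poly_Mapping.map.rep_eq when_def)

lemma keys_smul_subset: "Poly_Mapping.keys (smul c u) \<subseteq> Poly_Mapping.keys u"
  by (auto simp: in_keys_iff)

lemma smul_add_right: "smul c (u + v) = smul c u + smul c v"
  by (rule poly_mapping_eqI) (simp add: lookup_add distrib_left)

lemma smul_add_left: "smul (c + d) u = smul c u + smul d u"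
  by (rule poly_mapping_eqI) (simp add: lookup_add distrib_right)

lemma smul_smul: "smul c (smul d u) = smul (c * d) u"
  by (rule poly_mapping_eqI) (simp add: mult.assoc)

lemma smul_one [simp]: "smul 1 u = u"
  by (rule poly_mapping_eqI) simp

lemma smul_uminus: "smul c (- u) = - smul c u"
  by (rule poly_mapping_eqI) simp

lemma lookup_bvec: "Poly_Mapping.lookup (bvec x) y = (if x = y then 1 else 0)"
  by (simp add: bvec_def lookup_single when_def)

lemma keys_bvec [simp]: "Poly_Mapping.keys (bvec x :: _ \<Rightarrow>\<^sub>0 'k::field) = {x}"
  by (simp add: bvec_def)

lemma single_eq_smul_bvec: "Poly_Mapping.single x c = smul c (bvec x :: _ \<Rightarrow>\<^sub>0 'k::field)"
  by (rule poly_mapping_eqI) (simp add: lookup_single lookup_bvec when_def)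

lemma sum_single_lookup:
  "(\<Sum>x\<in>Poly_Mapping.keys v. Poly_Mapping.single x (Poly_Mapping.lookup v x)) = v"
  by (rule poly_mapping_eqI) (simp add: lookup_sum lookup_single when_def in_keys_iff)

lemma lookup_lin_ext:
  "Poly_Mapping.lookup (lin_ext b v) y
     = (\<Sum>x\<in>Poly_Mapping.keys v. Poly_Mapping.lookup v x * Poly_Mapping.lookup (b x) y)"
  by (simp add: lin_ext_def lookup_sum)

lemma lookup_lin_ext_superset:
  assumes "finite S" "Poly_Mapping.keys v \<subseteq> S"
  shows "Poly_Mapping.lookup (lin_ext b v) y
     = (\<Sum>x\<in>S. Poly_Mapping.lookup v x * Poly_Mapping.lookup (b x) y)"
  unfolding lookup_lin_ext
  by (rule sum.mono_neutral_left) (use assms in \<open>auto simp: in_keys_iff\<close>)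

lemma lin_ext_bvec [simp]: "lin_ext b (bvec x) = b x"
  by (rule poly_mapping_eqI) (simp add: lookup_lin_ext lookup_bvec)

lemma lin_map_lin_ext [simp, intro]:
  fixes b :: "'x \<Rightarrow> ('y \<Rightarrow>\<^sub>0 'k::field)"
  shows "lin_map (lin_ext b)"
  unfolding lin_map_def
proof (intro conjI allI)
  fix u v :: "'x \<Rightarrow>\<^sub>0 'k"
  let ?S = "Poly_Mapping.keys u \<union> Poly_Mapping.keys v"
  have "Poly_Mapping.keys (u + v) \<subseteq> ?S"
    by (rule keys_add)
  then show "lin_ext b (u + v) = lin_ext b u + lin_ext b v"
    by (intro poly_mapping_eqI)
      (simp add: lookup_add lookup_lin_ext_superset[of ?S] distrib_right sum.distrib)
next
  fix c and u :: "'x \<Rightarrow>\<^sub>0 'k"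
  show "lin_ext b (smul c u) = smul c (lin_ext b u)"
  proof (rule poly_mapping_eqI)
    fix y
    have "Poly_Mapping.lookup (lin_ext b (smul c u)) y
        = (\<Sum>x\<in>Poly_Mapping.keys u. Poly_Mapping.lookup (smul c u) x * Poly_Mapping.lookup (b x) y)"
      by (rule lookup_lin_ext_superset[OF finite_keys keys_smul_subset])
    then show "Poly_Mapping.lookup (lin_ext b (smul c u)) y = Poly_Mapping.lookup (smul c (lin_ext b u)) y"
      by (simp add: lookup_lin_ext sum_distrib_left mult.assoc)
  qed
qed

lemma lin_map_zero_eq:
  assumes "lin_map F"
  shows "F 0 = 0"
proof -
  have "F (0 + 0) = F 0 + F 0"
    using assms by (simp only: lin_map_def)
  then show ?thesis by simp
qed

lemma lin_map_uminus_eq: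
  assumes "lin_map F"
  shows "F (- u) = - F u"
proof -
  have "F (- u + u) = F (- u) + F u"
    using assms by (simp only: lin_map_def)
  then show ?thesis
    using lin_map_zero_eq[OF assms] by (simp add: eq_neg_iff_add_eq_0)
qed

lemma lin_map_diff_eq:
  assumes "lin_map F"
  shows "F (u - v) = F u - F v"
proof -
  have "F (u + - v) = F u + F (- v)"
    using assms by (simp only: lin_map_def)
  then show ?thesis
    using lin_map_uminus_eq[OF assms] by simp
qed

lemmas lin_ext_diff [simp] = lin_map_diff_eq[OF lin_map_lin_ext]
lemmas lin_ext_uminus [simp] = lin_map_uminus_eq[OF lin_map_lin_ext]

lemma lookup_tens:
  "Poly_Mapping.lookup (tens u v) p = Poly_Mapping.lookup u (fst p) * Poly_Mapping.lookup v (snd p)"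
proof (cases p)
  case (Pair x y)
  have "Poly_Mapping.lookup (tens u v) (x, y)
      = (\<Sum>x'\<in>Poly_Mapping.keys u. \<Sum>y'\<in>Poly_Mapping.keys v.
          (if x' = x then Poly_Mapping.lookup u x' else 0)
          * (if y' = y then Poly_Mapping.lookup v y' else 0))"
    by (auto simp: tens_def lookup_sum lookup_single when_def intro!: sum.cong)
  also have "\<dots> = (\<Sum>x'\<in>Poly_Mapping.keys u. if x' = x then Poly_Mapping.lookup u x' else 0)
      * (\<Sum>y'\<in>Poly_Mapping.keys v. if y' = y then Poly_Mapping.lookup v y' else 0)"
    by (rule sum_product[symmetric])
  also have "\<dots> = Poly_Mapping.lookup u x * Poly_Mapping.lookup v y"
    by (simp add: in_keys_iff)
  finally show ?thesis
    using Pair by simp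
qed

lemma tens_bvec_bvec [simp]: "tens (bvec x) (bvec y) = (bvec (x, y) :: _ \<Rightarrow>\<^sub>0 'k::field)"
  by (rule poly_mapping_eqI) (simp add: lookup_tens lookup_bvec prod_eq_iff)

lemma tens_add_left: "tens (u + u') v = tens u v + tens u' v"
  and tens_add_right: "tens u (v + v') = tens u v + tens u v'"
  and tens_smul_left: "tens (smul c u) v = smul c (tens u v)"
  and tens_smul_right: "tens u (smul c v) = smul c (tens u v)"
  by (rule poly_mapping_eqI, simp add: lookup_tens lookup_add algebra_simps)+

lemma tens_uminus_left [simp]: "tens (- u) v = - tens u v"
  and tens_uminus_right [simp]: "tens u (- v) = - tens u v"
  and tens_diff_left [simp]: "tens (u - u') v = tens u v - tens u' v"
  and tens_diff_right [simp]: "tens u (v - v') = tens u v - tens u v'"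
  by (rule poly_mapping_eqI, simp add: lookup_tens lookup_minus algebra_simps)+

definition lin_functional :: "(('x \<Rightarrow>\<^sub>0 'k::field) \<Rightarrow> 'k) \<Rightarrow> bool" where
  "lin_functional E \<longleftrightarrow>
     (\<forall>u v. E (u + v) = E u + E v) \<and> (\<forall>c u. E (smul c u) = c * E u)"

lemma lin_map_id: "lin_map (\<lambda>u. u)"
  by (simp add: lin_map_def)

lemma lin_map_zero: "lin_map (\<lambda>u. 0)"
  by (auto simp: lin_map_def intro: poly_mapping_eqI)

lemma lin_map_comp: "lin_map F \<Longrightarrow> lin_map G \<Longrightarrow> lin_map (\<lambda>u. F (G u))"
  by (simp add: lin_map_def)

lemma lin_map_add: "lin_map F \<Longrightarrow> lin_map G \<Longrightarrow> lin_map (\<lambda>u. F u + G u)"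
  by (simp add: lin_map_def smul_add_right)

lemma lin_map_uminus: "lin_map F \<Longrightarrow> lin_map (\<lambda>u. - F u)"
  by (simp add: lin_map_def smul_uminus)

lemma lin_map_tens_left: "lin_map F \<Longrightarrow> lin_map (\<lambda>u. tens (F u) w)"
  by (simp add: lin_map_def tens_add_left tens_smul_left)

lemma lin_map_tens_right: "lin_map F \<Longrightarrow> lin_map (\<lambda>u. tens w (F u))"
  by (simp add: lin_map_def tens_add_right tens_smul_right)

lemma lin_map_smul_functional: "lin_functional E \<Longrightarrow> lin_map (\<lambda>u. smul (E u) w)"
  by (simp add: lin_map_def lin_functional_def smul_add_left smul_smul)

lemma lin_map_lin_ext_kernel:
  assumes "\<And>z. lin_map (\<lambda>p. \<Phi> p z)"
  shows "lin_map (\<lambda>p. lin_ext (\<Phi> p) w)"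
  using assms unfolding lin_map_def
  by (auto intro!: poly_mapping_eqI
      simp: lookup_lin_ext lookup_add distrib_left sum.distrib sum_distrib_left mult.left_commute)

lemma lin_map_case_prod:
  "(\<And>a b. lin_map (\<lambda>p. f a b p)) \<Longrightarrow> lin_map (\<lambda>p. case z of (a, b) \<Rightarrow> f a b p)"
  by (cases z) simp

lemmas lin_map_intros = lin_map_id lin_map_zero lin_map_lin_ext lin_map_comp[OF lin_map_lin_ext]
  lin_map_add lin_map_uminus lin_map_tens_left lin_map_tens_right lin_map_lin_ext_kernel
  lin_map_case_prod

lemma lin_functional_comp: "lin_functional E \<Longrightarrow> lin_map F \<Longrightarrow> lin_functional (\<lambda>u. E (F u))"
  by (simp add: lin_functional_def lin_map_def)

lemma lin_functional_mult_left: "lin_functional E \<Longrightarrow> lin_functional (\<lambda>u. c * E u)"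
  by (simp add: lin_functional_def distrib_left mult.left_commute)

lemma lin_functional_mult_right: "lin_functional E \<Longrightarrow> lin_functional (\<lambda>u. E u * c)"
  by (simp add: lin_functional_def distrib_right mult.assoc)

lemma lin_ext_scalar_bvec [simp]: "lin_ext_scalar b (bvec x) = b x"
  by (simp add: lin_ext_scalar_def lookup_bvec)

lemma lin_ext_scalar_superset:
  assumes "finite S" "Poly_Mapping.keys v \<subseteq> S"
  shows "lin_ext_scalar b v = (\<Sum>x\<in>S. Poly_Mapping.lookup v x * b x)"
  unfolding lin_ext_scalar_def
  by (rule sum.mono_neutral_left) (use assms in \<open>auto simp: in_keys_iff\<close>)

lemma lin_functional_lin_ext_scalar:
  fixes b :: "'x \<Rightarrow> 'k::field"
  shows "lin_functional (lin_ext_scalar b)"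
  unfolding lin_functional_def
proof (intro conjI allI)
  fix u v :: "'x \<Rightarrow>\<^sub>0 'k"
  let ?S = "Poly_Mapping.keys u \<union> Poly_Mapping.keys v"
  have "Poly_Mapping.keys (u + v) \<subseteq> ?S"
    by (rule keys_add)
  then show "lin_ext_scalar b (u + v) = lin_ext_scalar b u + lin_ext_scalar b v"
    by (simp add: lin_ext_scalar_superset[of ?S] lookup_add distrib_right sum.distrib)
next
  fix c and u :: "'x \<Rightarrow>\<^sub>0 'k"
  have "lin_ext_scalar b (smul c u)
      = (\<Sum>x\<in>Poly_Mapping.keys u. Poly_Mapping.lookup (smul c u) x * b x)"
    by (rule lin_ext_scalar_superset[OF finite_keys keys_smul_subset])
  then show "lin_ext_scalar b (smul c u) = c * lin_ext_scalar b u"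
    by (simp add: lin_ext_scalar_def sum_distrib_left mult.assoc)
qed

section \<open>Multilinear identities are checked on basis vectors\<close>

lemma additive_sum:
  fixes F :: "'a::comm_monoid_add \<Rightarrow> 'b::ab_group_add"
  assumes "\<And>u v. F (u + v) = F u + F v" "finite S"
  shows "F (sum f S) = (\<Sum>x\<in>S. F (f x))"
  using assms(2)
proof (induction S rule: finite_induct)
  case empty
  have "F 0 = F 0 + F 0"
    using assms(1)[of 0 0] by simp
  then show ?case by simp
next
  case (insert x S)
  then show ?case using assms(1) by simp
qed

lemma additive_eq_on_singles:
  fixes F G :: "('x \<Rightarrow>\<^sub>0 'k::field) \<Rightarrow> 'b::ab_group_add"
  assumes "\<And>u v. F (u + v) = F u + F v" "\<And>u v. G (u + v) = G u + G v"
    and "\<And>x c. F (Poly_Mapping.single x c) = G (Poly_Mapping.single x c)"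
  shows "F v = G v"
proof -
  have "F (\<Sum>x\<in>Poly_Mapping.keys v. Poly_Mapping.single x (Poly_Mapping.lookup v x))
      = G (\<Sum>x\<in>Poly_Mapping.keys v. Poly_Mapping.single x (Poly_Mapping.lookup v x))"
    by (simp add: additive_sum assms)
  then show ?thesis
    by (simp only: sum_single_lookup)
qed

lemma lin_map_basis_eq:
  assumes "lin_map F" "lin_map G" "\<And>x. F (bvec x) = G (bvec x)"
  shows "F v = G v"
proof (rule additive_eq_on_singles[where F = F and G = G])
  show "F (u + v) = F u + F v" for u v
    using assms(1) by (simp add: lin_map_def)
  show "G (u + v) = G u + G v" for u v
    using assms(2) by (simp add: lin_map_def)
  show "F (Poly_Mapping.single x c) = G (Poly_Mapping.single x c)" for x c
    using assms by (simp add: lin_map_def single_eq_smul_bvec)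
qed

lemma lin_functional_basis_eq:
  assumes "lin_functional E" "lin_functional E'" "\<And>x. E (bvec x) = E' (bvec x)"
  shows "E v = E' v"
proof (rule additive_eq_on_singles[where F = E and G = E'])
  show "E (u + v) = E u + E v" for u v
    using assms(1) by (simp add: lin_functional_def)
  show "E' (u + v) = E' u + E' v" for u v
    using assms(2) by (simp add: lin_functional_def)
  show "E (Poly_Mapping.single x c) = E' (Poly_Mapping.single x c)" for x c
    using assms by (simp add: lin_functional_def single_eq_smul_bvec)
qed

lemma bilinear_basis_eq:
  assumes "\<And>v. lin_map (\<lambda>u. F u v)" "\<And>v. lin_map (\<lambda>u. G u v)"
    and "\<And>u. lin_map (\<lambda>v. F u v)" "\<And>u. lin_map (\<lambda>v. G u v)"
    and "\<And>x y. F (bvec x) (bvec y) = G (bvec x) (bvec y)"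
  shows "F u v = G u v"
proof -
  have "F (bvec x) v = G (bvec x) v" for x
    by (rule lin_map_basis_eq[where F = "F (bvec x)"]) (use assms in auto)
  then show ?thesis
    by (rule lin_map_basis_eq[where F = "\<lambda>u. F u v", rotated 2]) (use assms in auto)
qed

lemma trilinear_basis_eq:
  assumes "\<And>v w. lin_map (\<lambda>u. F u v w)" "\<And>v w. lin_map (\<lambda>u. G u v w)"
    and "\<And>u w. lin_map (\<lambda>v. F u v w)" "\<And>u w. lin_map (\<lambda>v. G u v w)"
    and "\<And>u v. lin_map (\<lambda>w. F u v w)" "\<And>u v. lin_map (\<lambda>w. G u v w)"
    and "\<And>x y z. F (bvec x) (bvec y) (bvec z) = G (bvec x) (bvec y) (bvec z)"
  shows "F u v w = G u v w"
proof -
  have "F (bvec x) v w = G (bvec x) v w" for x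
    by (rule bilinear_basis_eq[where F = "F (bvec x)"]) (use assms in auto)
  then show ?thesis
    by (rule lin_map_basis_eq[where F = "\<lambda>u. F u v w", rotated 2]) (use assms in auto)
qed

lemma bilinear_functional_basis_eq:
  assumes "\<And>v. lin_functional (\<lambda>u. E u v)" "\<And>v. lin_functional (\<lambda>u. E' u v)"
    and "\<And>u. lin_functional (\<lambda>v. E u v)" "\<And>u. lin_functional (\<lambda>v. E' u v)"
    and "\<And>x y. E (bvec x) (bvec y) = E' (bvec x) (bvec y)"
  shows "E u v = E' u v"
proof -
  have "E (bvec x) v = E' (bvec x) v" for x
    by (rule lin_functional_basis_eq[where E = "E (bvec x)"]) (use assms in auto)
  then show ?thesis
    by (rule lin_functional_basis_eq[where E = "\<lambda>u. E u v", rotated 2]) (use assms in auto)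
qed

lemma kA_Delta1_components:
  "fst (kA_Delta1 s t v) = lin_ext (\<lambda>a. bvec (a, t a)) v"
  "snd (kA_Delta1 s t v) = lin_ext (\<lambda>a. bvec (s a, a)) v"
  by (simp_all add: kA_Delta1_def)

text \<open>Unfolding these exposes every structure map as a linear extension \<open>lin_ext b\<close>, so that
the linearity side conditions of the basis reductions are discharged by \<open>lin_map_intros\<close> and
the values on basis vectors by \<open>simp\<close>.\<close>

lemmas structure_map_defs = kG_mult_def kG_Delta0_def kA_lact_def kA_ract_def kA_phi_def
  kA_Delta1_components kG_S0_def kA_S1_def tmap_def reassoc_def mult_tensor_def

lemma kG_counit_bvec [simp]: "kG_counit (bvec x :: _ \<Rightarrow>\<^sub>0 'k::field) = (1::'k)"
  by (simp add: kG_counit_def)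

lemma lin_functional_kG_counit: "lin_functional kG_counit"
  unfolding kG_counit_def by (rule lin_functional_lin_ext_scalar)

lemmas kG_counit_intros = lin_functional_comp[OF lin_functional_kG_counit]
  lin_functional_mult_left[OF lin_functional_kG_counit]
  lin_functional_mult_right[OF lin_functional_kG_counit]
  lin_map_smul_functional[OF lin_functional_kG_counit]

lemma kG_coalgebra: "is_coalgebra kG_Delta0 (kG_counit :: ('g \<Rightarrow>\<^sub>0 'k::field) \<Rightarrow> 'k)"
proof -
  have "reassoc (tmap kG_Delta0 id (kG_Delta0 u)) = tmap id kG_Delta0 (kG_Delta0 u)"
    for u :: "'g \<Rightarrow>\<^sub>0 'k"
    by (rule lin_map_basis_eq[of "\<lambda>u. reassoc (tmap kG_Delta0 id (kG_Delta0 u))"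
          "\<lambda>u. tmap id kG_Delta0 (kG_Delta0 u)"];
        (unfold structure_map_defs)?; (intro lin_map_intros)?; simp)
  moreover have "lin_ext (\<lambda>(x, y). smul (kG_counit (bvec x)) (bvec y)) (kG_Delta0 u) = u"
    for u :: "'g \<Rightarrow>\<^sub>0 'k"
    by (rule lin_map_basis_eq[of _ "\<lambda>u. u"];
        (unfold structure_map_defs)?; (intro lin_map_intros)?; simp)
  moreover have "lin_ext (\<lambda>(x, y). smul (kG_counit (bvec y)) (bvec x)) (kG_Delta0 u) = u"
    for u :: "'g \<Rightarrow>\<^sub>0 'k"
    by (rule lin_map_basis_eq[of _ "\<lambda>u. u"];
        (unfold structure_map_defs)?; (intro lin_map_intros)?; simp)
  ultimately show ?thesis
    using lin_functional_kG_counit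
    by (simp add: is_coalgebra_def lin_functional_def kG_Delta0_def)
qed

context monoid
begin

lemma kG_algebra:
  "is_algebra (kG_mult (\<^bold>*) :: ('a \<times> 'a \<Rightarrow>\<^sub>0 'k::field) \<Rightarrow> _) (kG_unit \<^bold>1)"
proof -
  have "kG_mult (\<^bold>*) (tens (kG_mult (\<^bold>*) (tens u v)) w)
      = kG_mult (\<^bold>*) (tens u (kG_mult (\<^bold>*) (tens v w)))"
    for u v w :: "'a \<Rightarrow>\<^sub>0 'k"
    by (rule trilinear_basis_eq[of "\<lambda>u v w. kG_mult (\<^bold>*) (tens (kG_mult (\<^bold>*) (tens u v)) w)"
          "\<lambda>u v w. kG_mult (\<^bold>*) (tens u (kG_mult (\<^bold>*) (tens v w)))"];
        (unfold structure_map_defs)?; (intro lin_map_intros)?; simp add: assoc)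
  moreover have "kG_mult (\<^bold>*) (tens (bvec \<^bold>1) u) = u" "kG_mult (\<^bold>*) (tens u (bvec \<^bold>1)) = u"
    for u :: "'a \<Rightarrow>\<^sub>0 'k"
    by (rule lin_map_basis_eq[of _ "\<lambda>u. u"];
        (unfold structure_map_defs)?; (intro lin_map_intros)?; simp)+
  ultimately show ?thesis
    by (simp add: is_algebra_def kG_unit_def kG_mult_def)
qed

lemma kG_bialgebra:
  "is_bialgebra (kG_mult (\<^bold>*) :: ('a \<times> 'a \<Rightarrow>\<^sub>0 'k::field) \<Rightarrow> _) (kG_unit \<^bold>1)
    kG_Delta0 kG_counit"
proof -
  have Delta0_mult: "kG_Delta0 (kG_mult (\<^bold>*) (tens u v))
      = mult_tensor (kG_mult (\<^bold>*)) (tens (kG_Delta0 u) (kG_Delta0 v))"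
    for u v :: "'a \<Rightarrow>\<^sub>0 'k"
    by (rule bilinear_basis_eq[of "\<lambda>u v. kG_Delta0 (kG_mult (\<^bold>*) (tens u v))"
          "\<lambda>u v. mult_tensor (kG_mult (\<^bold>*)) (tens (kG_Delta0 u) (kG_Delta0 v))"];
        (unfold structure_map_defs)?; (intro lin_map_intros)?; simp)
  have counit_mult: "kG_counit (kG_mult (\<^bold>*) (tens u v)) = kG_counit u * (kG_counit v :: 'k)"
    for u v :: "'a \<Rightarrow>\<^sub>0 'k"
    by (rule bilinear_functional_basis_eq[of "\<lambda>u v. kG_counit (kG_mult (\<^bold>*) (tens u v))"
          "\<lambda>u v. kG_counit u * kG_counit v"];
        (unfold structure_map_defs)?; (intro kG_counit_intros lin_map_intros)?; simp)
  show ?thesis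
    unfolding is_bialgebra_def
    by (intro conjI allI kG_algebra kG_coalgebra Delta0_mult counit_mult)
      (simp_all add: kG_unit_def kG_Delta0_def)
qed

end

context group
begin

lemma kG_antipode:
  "is_antipode (kG_mult (\<^bold>*) :: ('a \<times> 'a \<Rightarrow>\<^sub>0 'k::field) \<Rightarrow> _) (kG_unit \<^bold>1)
    kG_Delta0 kG_counit (kG_S0 inverse)"
proof -
  have "kG_mult (\<^bold>*) (tmap (kG_S0 inverse) id (kG_Delta0 u)) = smul (kG_counit u) (bvec \<^bold>1)"
    and "kG_mult (\<^bold>*) (tmap id (kG_S0 inverse) (kG_Delta0 u)) = smul (kG_counit u) (bvec \<^bold>1)"
    for u :: "'a \<Rightarrow>\<^sub>0 'k"
    by (rule lin_map_basis_eq[of _ "\<lambda>u. smul (kG_counit u) (bvec \<^bold>1)"];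
        (unfold structure_map_defs)?;
        (intro kG_counit_intros lin_map_intros)?; simp)+
  then show ?thesis
    by (simp add: is_antipode_def kG_unit_def kG_S0_def)
qed

end

section \<open>The Hopf algebra \<open>(k[A] \<rightarrow> k[G])\<close> in LM\<close>

locale group_like_graph_setting =
  fixes mult :: "'g \<Rightarrow> 'g \<Rightarrow> 'g" and e :: 'g and ginv :: "'g \<Rightarrow> 'g"
    and s t :: "'a \<Rightarrow> 'g" and lact :: "'g \<Rightarrow> 'a \<Rightarrow> 'a" and ract :: "'a \<Rightarrow> 'g \<Rightarrow> 'a"
  assumes group_like: "group_like_graph mult e ginv s t lact ract"
begin

sublocale group mult e ginv
  using group_like by (simp add: group_like_graph_def)

lemma group_like_graph_laws [simp]:
  "s (lact g a) = mult g (s a)" "t (lact g a) = mult g (t a)"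
  "s (ract a g) = mult (s a) g" "t (ract a g) = mult (t a) g"
  "ract (ract a g) h = ract a (mult g h)" "ract (lact g a) h = lact g (ract a h)"
  "lact g (lact h a) = lact (mult g h) a" "lact e a = a" "ract a e = a"
  using group_like by (simp_all add: group_like_graph_def)

lemma kA_bimodule:
  "is_bimodule (kG_mult mult :: ('g \<times> 'g \<Rightarrow>\<^sub>0 'k::field) \<Rightarrow> _) (kG_unit e)
    (kA_lact lact) (kA_ract ract)"
proof -
  have "kA_lact lact (tens h (kA_lact lact (tens h' a)))
      = kA_lact lact (tens (kG_mult mult (tens h h')) a)"
    for h h' :: "'g \<Rightarrow>\<^sub>0 'k" and a :: "'a \<Rightarrow>\<^sub>0 'k"
    by (rule trilinear_basis_eq[of "\<lambda>h h' a. kA_lact lact (tens h (kA_lact lact (tens h' a)))"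
          "\<lambda>h h' a. kA_lact lact (tens (kG_mult mult (tens h h')) a)"];
        (unfold structure_map_defs)?; (intro lin_map_intros)?; simp)
  moreover have "kA_ract ract (tens (kA_ract ract (tens a h)) h')
      = kA_ract ract (tens a (kG_mult mult (tens h h')))"
    for h h' :: "'g \<Rightarrow>\<^sub>0 'k" and a :: "'a \<Rightarrow>\<^sub>0 'k"
    by (rule trilinear_basis_eq[of "\<lambda>a h h'. kA_ract ract (tens (kA_ract ract (tens a h)) h')"
          "\<lambda>a h h'. kA_ract ract (tens a (kG_mult mult (tens h h')))"];
        (unfold structure_map_defs)?; (intro lin_map_intros)?; simp)
  moreover have "kA_ract ract (tens (kA_lact lact (tens h a)) h')
      = kA_lact lact (tens h (kA_ract ract (tens a h')))"
    for h h' :: "'g \<Rightarrow>\<^sub>0 'k" and a :: "'a \<Rightarrow>\<^sub>0 'k"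
    by (rule trilinear_basis_eq[of "\<lambda>h a h'. kA_ract ract (tens (kA_lact lact (tens h a)) h')"
          "\<lambda>h a h'. kA_lact lact (tens h (kA_ract ract (tens a h')))"];
        (unfold structure_map_defs)?; (intro lin_map_intros)?; simp)
  moreover have "kA_lact lact (tens (bvec e) a) = a" "kA_ract ract (tens a (bvec e)) = a"
    for a :: "'a \<Rightarrow>\<^sub>0 'k"
    by (rule lin_map_basis_eq[of _ "\<lambda>a. a"];
        (unfold structure_map_defs)?; (intro lin_map_intros)?; simp)+
  ultimately show ?thesis
    by (simp add: is_bimodule_def kG_unit_def kA_lact_def kA_ract_def)
qed

lemma kA_phi_lact:
  fixes h :: "'g \<Rightarrow>\<^sub>0 'k::field" and a :: "'a \<Rightarrow>\<^sub>0 'k"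
  shows "kA_phi s t (kA_lact lact (tens h a)) = kG_mult mult (tens h (kA_phi s t a))"
  by (rule bilinear_basis_eq[of "\<lambda>h a. kA_phi s t (kA_lact lact (tens h a))"
        "\<lambda>h a. kG_mult mult (tens h (kA_phi s t a))"];
      (unfold structure_map_defs)?; (intro lin_map_intros)?; simp)

lemma kA_phi_ract:
  fixes h :: "'g \<Rightarrow>\<^sub>0 'k::field" and a :: "'a \<Rightarrow>\<^sub>0 'k"
  shows "kA_phi s t (kA_ract ract (tens a h)) = kG_mult mult (tens (kA_phi s t a) h)"
  by (rule bilinear_basis_eq[of "\<lambda>a h. kA_phi s t (kA_ract ract (tens a h))"
        "\<lambda>a h. kG_mult mult (tens (kA_phi s t a) h)"];
      (unfold structure_map_defs)?; (intro lin_map_intros)?; simp)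

lemma kA_Delta1_lact:
  fixes h :: "'g \<Rightarrow>\<^sub>0 'k::field" and a :: "'a \<Rightarrow>\<^sub>0 'k"
  shows "kA_Delta1 s t (kA_lact lact (tens h a))
    = (left_AH (kG_mult mult) kG_Delta0 (kA_lact lact) h (fst (kA_Delta1 s t a)),
       left_HA (kG_mult mult) kG_Delta0 (kA_lact lact) h (snd (kA_Delta1 s t a)))"
    (is "_ = (?AH, ?HA)")
proof -
  have "fst (kA_Delta1 s t (kA_lact lact (tens h a))) = ?AH"
    by (rule bilinear_basis_eq[of "\<lambda>h a. fst (kA_Delta1 s t (kA_lact lact (tens h a)))"
          "\<lambda>h a. left_AH (kG_mult mult) kG_Delta0 (kA_lact lact) h (fst (kA_Delta1 s t a))"];
        (unfold structure_map_defs left_AH_def)?; (intro lin_map_intros)?; simp)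
  moreover have "snd (kA_Delta1 s t (kA_lact lact (tens h a))) = ?HA"
    by (rule bilinear_basis_eq[of "\<lambda>h a. snd (kA_Delta1 s t (kA_lact lact (tens h a)))"
          "\<lambda>h a. left_HA (kG_mult mult) kG_Delta0 (kA_lact lact) h (snd (kA_Delta1 s t a))"];
        (unfold structure_map_defs left_HA_def)?; (intro lin_map_intros)?; simp)
  ultimately show ?thesis
    by (simp add: prod_eq_iff)
qed

lemma kA_Delta1_ract:
  fixes h :: "'g \<Rightarrow>\<^sub>0 'k::field" and a :: "'a \<Rightarrow>\<^sub>0 'k"
  shows "kA_Delta1 s t (kA_ract ract (tens a h))
    = (right_AH (kG_mult mult) kG_Delta0 (kA_ract ract) (fst (kA_Delta1 s t a)) h,
       right_HA (kG_mult mult) kG_Delta0 (kA_ract ract) (snd (kA_Delta1 s t a)) h)"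
    (is "_ = (?AH, ?HA)")
proof -
  have "fst (kA_Delta1 s t (kA_ract ract (tens a h))) = ?AH"
    by (rule bilinear_basis_eq[of "\<lambda>a h. fst (kA_Delta1 s t (kA_ract ract (tens a h)))"
          "\<lambda>a h. right_AH (kG_mult mult) kG_Delta0 (kA_ract ract) (fst (kA_Delta1 s t a)) h"];
        (unfold structure_map_defs right_AH_def)?; (intro lin_map_intros)?; simp)
  moreover have "snd (kA_Delta1 s t (kA_ract ract (tens a h))) = ?HA"
    by (rule bilinear_basis_eq[of "\<lambda>a h. snd (kA_Delta1 s t (kA_ract ract (tens a h)))"
          "\<lambda>a h. right_HA (kG_mult mult) kG_Delta0 (kA_ract ract) (snd (kA_Delta1 s t a)) h"];
        (unfold structure_map_defs right_HA_def)?; (intro lin_map_intros)?; simp)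
  ultimately show ?thesis
    by (simp add: prod_eq_iff)
qed

lemma kG_Delta0_kA_phi:
  fixes a :: "'a \<Rightarrow>\<^sub>0 'k::field"
  shows "kG_Delta0 (kA_phi s t a)
    = tmap (kA_phi s t) id (fst (kA_Delta1 s t a)) + tmap id (kA_phi s t) (snd (kA_Delta1 s t a))"
  by (rule lin_map_basis_eq[of "\<lambda>a. kG_Delta0 (kA_phi s t a)"
        "\<lambda>a. tmap (kA_phi s t) id (fst (kA_Delta1 s t a))
          + tmap id (kA_phi s t) (snd (kA_Delta1 s t a))"];
      (unfold structure_map_defs)?; (intro lin_map_intros)?; simp)

lemma kA_bialgebra_LM:
  "is_bialgebra_LM (kG_mult mult :: ('g \<times> 'g \<Rightarrow>\<^sub>0 'k::field) \<Rightarrow> _) (kG_unit e)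
    kG_Delta0 kG_counit (kA_lact lact) (kA_ract ract) (kA_phi s t) (kA_Delta1 s t)"
  unfolding is_bialgebra_LM_def
  by (intro conjI allI kG_bialgebra kA_bimodule kA_phi_lact kA_phi_ract kA_Delta1_lact kA_Delta1_ract
      kG_Delta0_kA_phi) (simp_all add: kA_phi_def kA_Delta1_components)

lemma kA_phi_S1:
  fixes a :: "'a \<Rightarrow>\<^sub>0 'k::field"
  shows "kA_phi s t (kA_S1 ginv s t lact ract a) = kG_S0 ginv (kA_phi s t a)"
  by (rule lin_map_basis_eq[of "\<lambda>a. kA_phi s t (kA_S1 ginv s t lact ract a)"
        "\<lambda>a. kG_S0 ginv (kA_phi s t a)"];
      (unfold structure_map_defs)?; (intro lin_map_intros)?; simp flip: assoc)

lemma lin_map_kA_S1: "lin_map (kA_S1 ginv s t lact ract)"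
  by (simp add: kA_S1_def)

lemma kA_antipode_left:
  fixes a :: "'a \<Rightarrow>\<^sub>0 'k::field"
  shows "kA_ract ract (tmap (kA_S1 ginv s t lact ract) id (fst (kA_Delta1 s t a)))
    + kA_lact lact (tmap (kG_S0 ginv) id (snd (kA_Delta1 s t a))) = 0"
  by (rule lin_map_basis_eq[of
        "\<lambda>a. kA_ract ract (tmap (kA_S1 ginv s t lact ract) id (fst (kA_Delta1 s t a)))
          + kA_lact lact (tmap (kG_S0 ginv) id (snd (kA_Delta1 s t a)))" "\<lambda>a. 0"];
      (unfold structure_map_defs)?; (intro lin_map_intros)?; simp)

lemma kA_antipode_right:
  fixes a :: "'a \<Rightarrow>\<^sub>0 'k::field"
  shows "kA_ract ract (tmap id (kG_S0 ginv) (fst (kA_Delta1 s t a)))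
    + kA_lact lact (tmap id (kA_S1 ginv s t lact ract) (snd (kA_Delta1 s t a))) = 0"
  by (rule lin_map_basis_eq[of
        "\<lambda>a. kA_ract ract (tmap id (kG_S0 ginv) (fst (kA_Delta1 s t a)))
          + kA_lact lact (tmap id (kA_S1 ginv s t lact ract) (snd (kA_Delta1 s t a)))" "\<lambda>a. 0"];
      (unfold structure_map_defs)?; (intro lin_map_intros)?; simp)

end

theorem mainTheorem8:
  fixes mult :: "'g \<Rightarrow> 'g \<Rightarrow> 'g" and e :: 'g and ginv :: "'g \<Rightarrow> 'g"
    and s t :: "'a \<Rightarrow> 'g" and lact :: "'g \<Rightarrow> 'a \<Rightarrow> 'a" and ract :: "'a \<Rightarrow> 'g \<Rightarrow> 'a"
  assumes "group_like_graph mult e ginv s t lact ract"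
  shows "is_hopf_LM (kG_mult mult :: ('g \<times> 'g \<Rightarrow>\<^sub>0 'k::field_char_0) \<Rightarrow> _)
           (kG_unit e) kG_Delta0 kG_counit (kA_lact lact) (kA_ract ract) (kA_phi s t)
           (kA_Delta1 s t) (kG_S0 ginv) (kA_S1 ginv s t lact ract)"
proof -
  interpret group_like_graph_setting mult e ginv s t lact ract
    by (rule group_like_graph_setting.intro) (rule assms)
  show ?thesis
    unfolding is_hopf_LM_def
    by (intro conjI allI kA_bialgebra_LM kG_antipode lin_map_kA_S1 kA_phi_S1
        kA_antipode_left kA_antipode_right)
qed

end
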